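(* Let $G_0$ be a fixed $n\times l$ binary matrix, $G_1$ a fixed $n\times k$ binary matrix and $\mathbf m\in\{0,1\}^k$ fixed. Then $$P(E=0)\le\sum_{u=d_0}^{n}\beta^{u}(1-\beta)^{n-u}\sum_{w=d_0}^{u}B_{0,w}\binom{n-w}{u-w}.$$
   Context: All arithmetic is over $\mathrm{GF}(2)$. $\mathcal C_0^{\perp}=\{\mathbf x\in\{0,1\}^n: G_0^T\mathbf x=\mathbf 0\}$; $B_{0,w}$ is the number of vectors of Hamming weight $w$ in $\mathcal C_0^\perp$, and $d_0$ is the minimum Hamming weight of a nonzero vector of $\mathcal C_0^\perp$. Defect model: each of the $n$ memory cells is independently defective with probability $\beta\in(0,1)$; a defective cell is stuck at $0$ or at $1$, each with probability $1/2$, independently. Let $\mathcal U$ be the set of defect positions, $U=|\mathcal U|$, $\mathbf s^{\mathcal U}$ the vector of stuck-at values. For a matrix $M$ (resp. vector $\mathbf v$) with rows indexed by $\{1,\dots,n\}$, $M^{\mathcal U}$ (resp. $\mathbf v^{\mathcal U}$) denotes the rows indexed by $\mathcal U$. Encoding: with $\mathbf b^{\mathcal U}=(G_1\mathbf m)^{\mathcal U}+\mathbf s^{\mathcal U}$, look for $\mathbf d\in\{0,1\}^l$ with $G_0^{\mathcal U}\mathbf d=\mathbf b^{\mathcal U}$; $E=1$ if such $\mathbf d$ exists and $E=0$ (encoding failure) otherwise. *)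

theory Defs
  imports Complex_Main "HOL-Library.Z2" "HOL-Library.FuncSet"
begin

(* Binary matrices: G i j :: bit with rows i < n, columns j < (l or k).
   Vectors in {0,1}^N: functions nat => bit, only indices < N matter. *)

definition mat_vec :: "(nat \<Rightarrow> nat \<Rightarrow> bit) \<Rightarrow> nat \<Rightarrow> (nat \<Rightarrow> bit) \<Rightarrow> nat \<Rightarrow> bit" where
  "mat_vec G c v i = (\<Sum>j<c. G i j * v j)"

definition dual_code :: "nat \<Rightarrow> nat \<Rightarrow> (nat \<Rightarrow> nat \<Rightarrow> bit) \<Rightarrow> (nat \<Rightarrow> bit) set" where
  "dual_code n l G0 = {x. (\<forall>i. n \<le> i \<longrightarrow> x i = 0) \<and> (\<forall>j<l. (\<Sum>i<n. G0 i j * x i) = 0)}"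

definition hweight :: "nat \<Rightarrow> (nat \<Rightarrow> bit) \<Rightarrow> nat" where
  "hweight n x = card {i. i < n \<and> x i \<noteq> 0}"

definition weight_count :: "nat \<Rightarrow> nat \<Rightarrow> (nat \<Rightarrow> nat \<Rightarrow> bit) \<Rightarrow> nat \<Rightarrow> nat" where
  "weight_count n l G0 w = card {x \<in> dual_code n l G0. hweight n x = w}"

(* d_0: minimum weight of a nonzero codeword (Inf {} = 0 if none exists) *)
definition min_dist :: "nat \<Rightarrow> nat \<Rightarrow> (nat \<Rightarrow> nat \<Rightarrow> bit) \<Rightarrow> nat" where
  "min_dist n l G0 = Inf {hweight n x | x. x \<in> dual_code n l G0 \<and> x \<noteq> (\<lambda>_. 0)}"

(* A cell configuration: c i = None (not defective) or Some s (stuck at s), for i < n. *)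
definition configs :: "nat \<Rightarrow> (nat \<Rightarrow> bit option) set" where
  "configs n = PiE {..<n} (\<lambda>_. UNIV)"

definition config_prob :: "real \<Rightarrow> nat \<Rightarrow> (nat \<Rightarrow> bit option) \<Rightarrow> real" where
  "config_prob \<beta> n c = (\<Prod>i<n. (case c i of None \<Rightarrow> 1 - \<beta> | Some _ \<Rightarrow> \<beta> / 2))"

definition encodable ::
  "nat \<Rightarrow> nat \<Rightarrow> nat \<Rightarrow> (nat \<Rightarrow> nat \<Rightarrow> bit) \<Rightarrow> (nat \<Rightarrow> nat \<Rightarrow> bit) \<Rightarrow> (nat \<Rightarrow> bit)
     \<Rightarrow> (nat \<Rightarrow> bit option) \<Rightarrow> bool" where
  "encodable n l k G0 G1 m c =
     (\<exists>d. \<forall>i<n. \<forall>s. c i = Some s \<longrightarrow> mat_vec G0 l d i = mat_vec G1 k m i + s)"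

definition fail_prob ::
  "real \<Rightarrow> nat \<Rightarrow> nat \<Rightarrow> nat \<Rightarrow> (nat \<Rightarrow> nat \<Rightarrow> bit) \<Rightarrow> (nat \<Rightarrow> nat \<Rightarrow> bit) \<Rightarrow> (nat \<Rightarrow> bit) \<Rightarrow> real" where
  "fail_prob \<beta> n l k G0 G1 m =
     (\<Sum>c\<in>configs n. if encodable n l k G0 G1 m c then 0 else config_prob \<beta> n c)"

end

theory Submission imports Defs begin

text \<open>If encoding fails, the Fredholm alternative over GF(2) yields a nonzero dual codeword x
  whose support lies inside the defect set. So the failure event is covered by the events
  "every position in the support of x is defective", one for each nonzero dual codeword x, and
  the event for x has probability \<open>\<beta>^wt(x)\<close>. The union bound, grouped by weight, gives
  \<open>\<Sum>_w B_{0,w} \<beta>^w\<close>, and expanding \<open>\<beta>^w = \<beta>^w (\<beta> + (1 - \<beta>))^(n-w)\<close> binomially turns this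
  into the stated double sum.\<close>

(* bit is used as the field GF(2), not through its Boolean encoding *)
declare add_bit_eq_xor [simp del] mult_bit_eq_and [simp del]

lemma UNIV_bit: "(UNIV :: bit set) = {0, 1}"
  by (auto intro: bit.exhaust)

instance bit :: finite
  by standard (simp add: UNIV_bit)

definition defects :: "nat \<Rightarrow> (nat \<Rightarrow> bit option) \<Rightarrow> nat set" where
  "defects n c = {i. i < n \<and> c i \<noteq> None}"

definition support :: "nat \<Rightarrow> (nat \<Rightarrow> bit) \<Rightarrow> nat set" where
  "support n x = {i. i < n \<and> x i \<noteq> 0}"

lemma hweight_eq_card_support: "hweight n x = card (support n x)"
  by (simp add: hweight_def support_def)

lemma support_subset: "support n x \<subseteq> {..<n}"
  by (auto simp: support_def)

lemma hweight_le: "hweight n x \<le> n"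
  using card_mono[OF _ support_subset, of n x] by (simp add: hweight_eq_card_support)

lemma linear_system_solvable_or_certificate:
  fixes A :: "'i \<Rightarrow> nat \<Rightarrow> 'a::field" and b :: "'i \<Rightarrow> 'a"
  assumes "finite R"
  shows "(\<exists>d. \<forall>i\<in>R. (\<Sum>j<l. A i j * d j) = b i) \<or>
         (\<exists>y. (\<forall>j<l. (\<Sum>i\<in>R. y i * A i j) = 0) \<and> (\<Sum>i\<in>R. y i * b i) \<noteq> 0)"
  using assms
proof (induction l arbitrary: R A b)
  case 0
  show ?case
  proof (cases "\<forall>i\<in>R. b i = 0")
    case False
    then obtain p where "p \<in> R" "b p \<noteq> 0" by auto
    moreover have "(\<Sum>i\<in>R. (if i = p then 1 else 0) * b i) = (\<Sum>i\<in>R. if i = p then b i else 0)"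
      by (rule sum.cong) auto
    ultimately show ?thesis
      using "0" by (intro disjI2 exI[of _ "\<lambda>i. if i = p then 1 else 0"]) auto
  qed auto
next
  case (Suc l)
  show ?case
  proof (cases "\<forall>i\<in>R. A i l = 0")
    case True
    with Suc.IH[OF Suc.prems, of A b] show ?thesis
      by (auto simp: less_Suc_eq)
  next
    case False
    then obtain p where p: "p \<in> R" "A p l \<noteq> 0" by auto
    txt \<open>Gaussian elimination: clear column \<open>l\<close> with pivot row \<open>p\<close> and recurse on the other rows.\<close>
    define c where "c i = A i l / A p l" for i
    define R' where "R' = R - {p}"
    define A' where "A' i j = A i j - c i * A p j" for i j
    define b' where "b' i = b i - c i * b p" for i
    have fR': "finite R'" using Suc.prems by (simp add: R'_def)
    have R: "R = insert p R'" "p \<notin> R'" using p by (auto simp: R'_def)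
    from Suc.IH[OF fR', of A' b'] show ?thesis
    proof (elim disjE exE conjE)
      fix d assume d: "\<forall>i\<in>R'. (\<Sum>j<l. A' i j * d j) = b' i"
      define dl where "dl = (b p - (\<Sum>j<l. A p j * d j)) / A p l"
      have extend: "(\<Sum>j<Suc l. A i j * (d(l := dl)) j) = (\<Sum>j<l. A i j * d j) + c i * (b p - (\<Sum>j<l. A p j * d j))" for i
      proof -
        have "A i l * dl = c i * (b p - (\<Sum>j<l. A p j * d j))"
          using p(2) by (simp add: c_def dl_def)
        then show ?thesis by simp
      qed
      have "\<forall>i\<in>R. (\<Sum>j<Suc l. A i j * (d(l := dl)) j) = b i"
      proof
        fix i assume i: "i \<in> R"
        show "(\<Sum>j<Suc l. A i j * (d(l := dl)) j) = b i"
        proof (cases "i = p")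
          case True
          then show ?thesis using p(2) unfolding extend by (simp add: c_def)
        next
          case False
          then have "(\<Sum>j<l. A' i j * d j) = b' i" using d i by (simp add: R'_def)
          then have "(\<Sum>j<l. A i j * d j) - c i * (\<Sum>j<l. A p j * d j) = b i - c i * b p"
            by (simp add: A'_def b'_def algebra_simps sum_subtractf sum_distrib_left)
          then show ?thesis unfolding extend by (simp add: algebra_simps)
        qed
      qed
      then show ?thesis by blast
    next
      fix y assume y: "\<forall>j<l. (\<Sum>i\<in>R'. y i * A' i j) = 0" "(\<Sum>i\<in>R'. y i * b' i) \<noteq> 0"
      define yp where "yp = - (\<Sum>i\<in>R'. y i * c i)"
      have split: "(\<Sum>i\<in>R. (y(p := yp)) i * f i) = (\<Sum>i\<in>R'. y i * f i) + yp * f p" for f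
      proof -
        have "(\<Sum>i\<in>R'. (y(p := yp)) i * f i) = (\<Sum>i\<in>R'. y i * f i)"
          using R(2) by (intro sum.cong) auto
        then show ?thesis using R fR' by (simp add: add.commute)
      qed
      have "\<forall>j<Suc l. (\<Sum>i\<in>R. (y(p := yp)) i * A i j) = 0"
      proof (intro allI impI)
        fix j assume "j < Suc l"
        then consider "j < l" | "j = l" by linarith
        then show "(\<Sum>i\<in>R. (y(p := yp)) i * A i j) = 0"
        proof cases
          case 1
          have "(\<Sum>i\<in>R'. y i * A' i j) = (\<Sum>i\<in>R'. y i * A i j) + yp * A p j"
            by (simp add: A'_def yp_def algebra_simps sum_subtractf sum_distrib_left sum_distrib_right)
          then show ?thesis using y(1) 1 unfolding split by simp
        next
          case 2
          then show ?thesis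
            using p(2) unfolding split by (simp add: yp_def c_def sum_distrib_right)
        qed
      qed
      moreover have "(\<Sum>i\<in>R'. y i * b' i) = (\<Sum>i\<in>R'. y i * b i) + yp * b p"
        by (simp add: b'_def yp_def algebra_simps sum_subtractf sum_distrib_left sum_distrib_right)
      then have "(\<Sum>i\<in>R. (y(p := yp)) i * b i) \<noteq> 0"
        using y(2) unfolding split by simp
      ultimately show ?thesis by blast
    qed
  qed
qed

lemma finite_dual_code: "finite (dual_code n l G0)"
proof -
  have "dual_code n l G0 \<subseteq>
      {x. \<forall>i. (i \<in> {..<n} \<longrightarrow> x i \<in> UNIV) \<and> (i \<notin> {..<n} \<longrightarrow> x i = 0)}"
    by (auto simp: dual_code_def)
  then show ?thesis
    by (rule finite_subset) (intro finite_set_of_finite_funs; simp)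
qed

lemma min_dist_le_hweight:
  assumes "x \<in> dual_code n l G0" "x \<noteq> (\<lambda>_. 0)"
  shows "min_dist n l G0 \<le> hweight n x"
  unfolding min_dist_def using assms by (intro cInf_lower) auto

lemma not_encodable_imp_dual_codeword:
  assumes "\<not> encodable n l k G0 G1 m c"
  obtains x where "x \<in> dual_code n l G0" "x \<noteq> (\<lambda>_. 0)" "support n x \<subseteq> defects n c"
proof -
  define R where "R = defects n c"
  define b where "b i = mat_vec G1 k m i + the (c i)" for i
  have "finite R" by (simp add: R_def defects_def)
  from linear_system_solvable_or_certificate[OF this, of G0 l b] show ?thesis
  proof (elim disjE exE conjE)
    fix d assume "\<forall>i\<in>R. (\<Sum>j<l. G0 i j * d j) = b i"
    then have "encodable n l k G0 G1 m c"
      unfolding encodable_def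
      by (intro exI[of _ d]) (auto simp: R_def defects_def b_def mat_vec_def)
    with assms show ?thesis by blast
  next
    fix y assume y: "\<forall>j<l. (\<Sum>i\<in>R. y i * G0 i j) = 0" "(\<Sum>i\<in>R. y i * b i) \<noteq> 0"
    define x where "x i = (if i \<in> R then y i else 0)" for i
    have "R \<subseteq> {..<n}" by (auto simp: R_def defects_def)
    have "(\<Sum>i<n. G0 i j * x i) = (\<Sum>i\<in>R. y i * G0 i j)" for j
    proof -
      have "(\<Sum>i<n. G0 i j * x i) = (\<Sum>i<n. if i \<in> R then y i * G0 i j else 0)"
        by (rule sum.cong) (auto simp: x_def)
      also have "\<dots> = (\<Sum>i\<in>{..<n} \<inter> R. y i * G0 i j)"
        by (simp add: sum.inter_restrict)
      also have "{..<n} \<inter> R = R" using \<open>R \<subseteq> {..<n}\<close> by blast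
      finally show ?thesis .
    qed
    then have "x \<in> dual_code n l G0"
      using y(1) by (auto simp: dual_code_def x_def R_def defects_def)
    moreover have "x \<noteq> (\<lambda>_. 0)"
    proof
      assume "x = (\<lambda>_. 0)"
      then have "\<forall>i\<in>R. y i = 0" by (metis x_def)
      with y(2) show False by simp
    qed
    moreover have "support n x \<subseteq> defects n c"
      by (auto simp: support_def x_def R_def)
    ultimately show ?thesis by (rule that)
  qed
qed

lemma finite_configs: "finite (configs n)"
  by (simp add: configs_def finite_PiE)

lemma config_prob_nonneg:
  assumes "0 \<le> \<beta>" "\<beta> \<le> 1"
  shows "0 \<le> config_prob \<beta> n c"
  unfolding config_prob_def using assms by (intro prod_nonneg) (auto split: option.split)

lemma UNIV_bit_option: "(UNIV :: bit option set) = {None, Some 0, Some 1}"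
  using UNIV_bit UNIV_option_conv by auto

lemma prob_defects_superset:
  assumes "S \<subseteq> {..<n}"
  shows "(\<Sum>c\<in>{c \<in> configs n. S \<subseteq> defects n c}. config_prob \<beta> n c) = \<beta> ^ card S"
proof -
  txt \<open>The constraint \<open>S \<subseteq> defects n c\<close> is absorbed into the factors, so the sum factorises.\<close>
  define f where "f i v = (case v of None \<Rightarrow> if i \<in> S then 0 else 1 - \<beta> | Some _ \<Rightarrow> \<beta> / 2)"
    for i and v :: "bit option"
  have factor: "(if S \<subseteq> defects n c then config_prob \<beta> n c else 0) = (\<Prod>i<n. f i (c i))" for c
  proof (cases "S \<subseteq> defects n c")
    case True
    then show ?thesis unfolding config_prob_def f_def
      by (auto intro!: prod.cong simp: defects_def split: option.split)
  next
    case False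
    then obtain i where "i \<in> S" "c i = None" using assms by (auto simp: defects_def)
    then have "(\<Prod>i<n. f i (c i)) = 0"
      using assms by (intro prod_zero) (auto simp: f_def intro!: bexI[of _ i])
    then show ?thesis using False by simp
  qed
  have "(\<Sum>c\<in>{c \<in> configs n. S \<subseteq> defects n c}. config_prob \<beta> n c)
      = (\<Sum>c\<in>configs n. if S \<subseteq> defects n c then config_prob \<beta> n c else 0)"
    by (rule sum.inter_filter[OF finite_configs])
  also have "\<dots> = (\<Sum>c\<in>PiE {..<n} (\<lambda>_. UNIV). \<Prod>i<n. f i (c i))"
    by (simp only: factor configs_def)
  also have "\<dots> = (\<Prod>i<n. \<Sum>v\<in>UNIV. f i v)"
    by (rule prod_sum_PiE[symmetric]) auto
  also have "\<dots> = (\<Prod>i<n. if i \<in> S then \<beta> else 1)"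
    by (intro prod.cong) (auto simp: UNIV_bit_option f_def)
  also have "\<dots> = \<beta> ^ card S"
    using assms by (simp add: prod.If_cases Int_absorb1)
  finally show ?thesis .
qed

lemma sum_UN_le:
  fixes f :: "'a \<Rightarrow> real"
  assumes "finite I" "\<And>i. i \<in> I \<Longrightarrow> finite (E i)" "\<And>i a. i \<in> I \<Longrightarrow> a \<in> E i \<Longrightarrow> 0 \<le> f a"
  shows "sum f (\<Union>i\<in>I. E i) \<le> (\<Sum>i\<in>I. sum f (E i))"
  using assms
proof (induction I rule: finite_induct)
  case (insert i I)
  have "sum f (E i \<union> (\<Union>j\<in>I. E j)) \<le> sum f (E i) + sum f (\<Union>j\<in>I. E j)"
    using insert by (subst sum_Un) (auto intro!: sum_nonneg)
  also have "sum f (\<Union>j\<in>I. E j) \<le> (\<Sum>j\<in>I. sum f (E j))"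
    by (rule insert.IH) (use insert.prems in auto)
  finally show ?case using insert.hyps by simp
qed simp

lemma fail_prob_le_sum_dual_codewords:
  assumes "0 \<le> \<beta>" "\<beta> \<le> 1"
  shows "fail_prob \<beta> n l k G0 G1 m \<le> (\<Sum>x\<in>dual_code n l G0 - {\<lambda>_. 0}. \<beta> ^ hweight n x)"
proof -
  define D where "D = dual_code n l G0 - {\<lambda>_. 0}"
  define covered where "covered x = {c \<in> configs n. support n x \<subseteq> defects n c}" for x
  have "fail_prob \<beta> n l k G0 G1 m
      = (\<Sum>c\<in>{c \<in> configs n. \<not> encodable n l k G0 G1 m c}. config_prob \<beta> n c)"
    unfolding fail_prob_def
    by (auto simp: sum.inter_filter[OF finite_configs] intro!: sum.cong)
  also have "\<dots> \<le> sum (config_prob \<beta> n) (\<Union>x\<in>D. covered x)"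
  proof (rule sum_mono2)
    show "{c \<in> configs n. \<not> encodable n l k G0 G1 m c} \<subseteq> (\<Union>x\<in>D. covered x)"
      by (auto simp: D_def covered_def elim: not_encodable_imp_dual_codeword)
  qed (use assms finite_dual_code finite_configs config_prob_nonneg in \<open>auto simp: D_def covered_def\<close>)
  also have "\<dots> \<le> (\<Sum>x\<in>D. sum (config_prob \<beta> n) (covered x))"
    using assms finite_dual_code finite_configs config_prob_nonneg
    by (intro sum_UN_le) (auto simp: D_def covered_def)
  also have "\<dots> = (\<Sum>x\<in>D. \<beta> ^ hweight n x)"
    by (simp add: covered_def prob_defects_superset support_subset hweight_eq_card_support)
  finally show ?thesis unfolding D_def .
qed

lemma sum_dual_codewords_le_weight_distribution:
  assumes "0 \<le> \<beta>"
  shows "(\<Sum>x\<in>dual_code n l G0 - {\<lambda>_. 0}. \<beta> ^ hweight n x)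
    \<le> (\<Sum>w = min_dist n l G0..n. real (weight_count n l G0 w) * \<beta> ^ w)"
proof -
  define D where "D = dual_code n l G0 - {\<lambda>_. 0}"
  have "(\<Sum>x\<in>D. \<beta> ^ hweight n x)
      = (\<Sum>w = min_dist n l G0..n. \<Sum>x\<in>{x \<in> D. hweight n x = w}. \<beta> ^ hweight n x)"
    by (rule sum.group[symmetric]) (auto simp: D_def finite_dual_code hweight_le intro: min_dist_le_hweight)
  also have "\<dots> \<le> (\<Sum>w = min_dist n l G0..n. real (weight_count n l G0 w) * \<beta> ^ w)"
  proof (rule sum_mono)
    fix w
    have "card {x \<in> D. hweight n x = w} \<le> weight_count n l G0 w"
      unfolding weight_count_def by (rule card_mono) (auto simp: D_def finite_dual_code)
    then show "(\<Sum>x\<in>{x \<in> D. hweight n x = w}. \<beta> ^ hweight n x) \<le> real (weight_count n l G0 w) * \<beta> ^ w"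
      using assms by (simp add: mult_right_mono)
  qed
  finally show ?thesis unfolding D_def .
qed

lemma sum_binomial_shifted:
  fixes \<beta> :: real
  assumes "w \<le> n"
  shows "(\<Sum>u = w..n. \<beta> ^ u * (1 - \<beta>) ^ (n - u) * real ((n - w) choose (u - w))) = \<beta> ^ w"
proof -
  have "{w..n} = (+) w ` {..n - w}"
    using assms by (simp add: atLeast0AtMost[symmetric] image_add_atLeastAtMost add.commute)
  then have "(\<Sum>u = w..n. \<beta> ^ u * (1 - \<beta>) ^ (n - u) * real ((n - w) choose (u - w)))
      = (\<Sum>t\<le>n - w. \<beta> ^ (w + t) * (1 - \<beta>) ^ (n - (w + t)) * real ((n - w) choose t))"
    by (simp add: sum.reindex)
  also have "\<dots> = \<beta> ^ w * (\<Sum>t\<le>n - w. real ((n - w) choose t) * \<beta> ^ t * (1 - \<beta>) ^ (n - w - t))"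
    by (simp add: sum_distrib_left power_add algebra_simps)
  also have "\<dots> = \<beta> ^ w * (\<beta> + (1 - \<beta>)) ^ (n - w)"
    by (simp only: binomial_ring)
  finally show ?thesis by simp
qed

lemma weight_enumerator_binomial_expansion:
  fixes \<beta> :: real and B :: "nat \<Rightarrow> real"
  shows "(\<Sum>u = a..n. \<beta> ^ u * (1 - \<beta>) ^ (n - u) * (\<Sum>w = a..u. B w * real ((n - w) choose (u - w))))
       = (\<Sum>w = a..n. B w * \<beta> ^ w)"
proof -
  define g where "g u w = \<beta> ^ u * (1 - \<beta>) ^ (n - u) * (B w * real ((n - w) choose (u - w)))" for u w
  have "(\<Sum>u = a..n. \<beta> ^ u * (1 - \<beta>) ^ (n - u) * (\<Sum>w = a..u. B w * real ((n - w) choose (u - w))))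
      = (\<Sum>u\<in>{a..n}. \<Sum>w\<in>{w. w \<in> {a..n} \<and> w \<le> u}. g u w)"
  proof (rule sum.cong)
    fix u assume "u \<in> {a..n}"
    then have "{w. w \<in> {a..n} \<and> w \<le> u} = {a..u}" by auto
    then show "\<beta> ^ u * (1 - \<beta>) ^ (n - u) * (\<Sum>w = a..u. B w * real ((n - w) choose (u - w)))
      = (\<Sum>w\<in>{w. w \<in> {a..n} \<and> w \<le> u}. g u w)"
      by (simp add: g_def sum_distrib_left)
  qed simp
  also have "\<dots> = (\<Sum>w\<in>{a..n}. \<Sum>u\<in>{u. u \<in> {a..n} \<and> w \<le> u}. g u w)"
    by (rule sum.swap_restrict) auto
  also have "\<dots> = (\<Sum>w = a..n. B w * \<beta> ^ w)"
  proof (rule sum.cong)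
    fix w assume w: "w \<in> {a..n}"
    then have "{u. u \<in> {a..n} \<and> w \<le> u} = {w..n}" by auto
    then have "(\<Sum>u\<in>{u. u \<in> {a..n} \<and> w \<le> u}. g u w)
        = B w * (\<Sum>u = w..n. \<beta> ^ u * (1 - \<beta>) ^ (n - u) * real ((n - w) choose (u - w)))"
      by (simp add: g_def sum_distrib_left algebra_simps)
    also have "\<dots> = B w * \<beta> ^ w" using w by (simp add: sum_binomial_shifted)
    finally show "(\<Sum>u\<in>{u. u \<in> {a..n} \<and> w \<le> u}. g u w) = B w * \<beta> ^ w" .
  qed simp
  finally show ?thesis .
qed

theorem corollary1:
  fixes \<beta> :: real and n l k :: nat
    and G0 G1 :: "nat \<Rightarrow> nat \<Rightarrow> bit" and m :: "nat \<Rightarrow> bit"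
  assumes "0 < \<beta>" and "\<beta> < 1"
  shows "fail_prob \<beta> n l k G0 G1 m \<le>
    (\<Sum>u = min_dist n l G0..n. \<beta> ^ u * (1 - \<beta>) ^ (n - u) *
       (\<Sum>w = min_dist n l G0..u. real (weight_count n l G0 w) * real ((n - w) choose (u - w))))"
proof -
  have "fail_prob \<beta> n l k G0 G1 m \<le> (\<Sum>x\<in>dual_code n l G0 - {\<lambda>_. 0}. \<beta> ^ hweight n x)"
    using assms by (intro fail_prob_le_sum_dual_codewords) auto
  also have "\<dots> \<le> (\<Sum>w = min_dist n l G0..n. real (weight_count n l G0 w) * \<beta> ^ w)"
    using assms by (intro sum_dual_codewords_le_weight_distribution) auto
  also have "\<dots> = (\<Sum>u = min_dist n l G0..n. \<beta> ^ u * (1 - \<beta>) ^ (n - u) *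
       (\<Sum>w = min_dist n l G0..u. real (weight_count n l G0 w) * real ((n - w) choose (u - w))))"
    by (rule weight_enumerator_binomial_expansion[symmetric])
  finally show ?thesis .
qed

end
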